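(* Let $T$ be a tree and $e$ an edge of $T$. Let $T'$ and $T''$ be the two subtrees obtained by deleting $e$. Let $S(T')$ be an optimal s-sequence for Problem A$(T')$ and $S(T'')$ an optimal s-sequence for Problem A$(T'')$. Then there exists an optimal s-sequence for Problem A$^{(e)}(T)$ in which the edges of $T'$ appear in the same relative order as in $S(T')$ and the edges of $T''$ appear in the same relative order as in $S(T'')$.
   Context: Let $T$ be a tree with a length $c_e>0$ for each edge and a nonnegative weight $w_{\{u,v\}}$ for each unordered vertex pair, with $w_{\{v,v\}}=0$. Pairs with positive weight are relevant pairs (r-pairs). For a subtree $T'$ of $T$, Problem A$(T')$ is defined as follows. Its r-pairs are those r-pairs of $T$ with both vertices in $T'$, keeping the same weights. An s-sequence for $T'$ is an ordering $(e_1,\dots,e_k)$ of all edges of $T'$, where $e_i$ is completed at time $\sum_{j\le i}c_{e_j}$. The connection time $t_{\{u,v\}}$ of an r-pair is the completion time of the last-built edge of the unique $u$–$v$ path in $T'$. Problem A$(T')$ asks for an s-sequence minimizing $\sum w_{\{u,v\}}t_{\{u,v\}}$ over these r-pairs. Problem A$^{(e)}(T)$ is Problem A$(T)$ with the additional constraint that edge $e$ is the last edge in the s-sequence. *)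

theory Defs
  imports Complex_Main
begin

definition is_path :: "'a set set \<Rightarrow> 'a \<Rightarrow> 'a \<Rightarrow> 'a list \<Rightarrow> bool" where
  "is_path E u v xs \<longleftrightarrow> xs \<noteq> [] \<and> hd xs = u \<and> last xs = v \<and> distinct xs \<and>
     (\<forall>i. Suc i < length xs \<longrightarrow> {xs ! i, xs ! Suc i} \<in> E)"

definition path_edges :: "'a list \<Rightarrow> 'a set set" where
  "path_edges xs = {{xs ! i, xs ! Suc i} | i. Suc i < length xs}"

definition is_tree :: "'a set \<Rightarrow> 'a set set \<Rightarrow> bool" where
  "is_tree V E \<longleftrightarrow> finite V \<and> V \<noteq> {} \<and>
     (\<forall>f\<in>E. \<exists>u v. f = {u, v} \<and> u \<noteq> v \<and> u \<in> V \<and> v \<in> V) \<and>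
     (\<forall>u\<in>V. \<forall>v\<in>V. \<exists>!xs. is_path E u v xs)"

definition tree_path :: "'a set set \<Rightarrow> 'a \<Rightarrow> 'a \<Rightarrow> 'a list" where
  "tree_path E u v = (THE xs. is_path E u v xs)"

definition s_sequence :: "'a set set \<Rightarrow> 'a set list \<Rightarrow> bool" where
  "s_sequence E s \<longleftrightarrow> distinct s \<and> set s = E"

definition completion_time :: "('a set \<Rightarrow> real) \<Rightarrow> 'a set list \<Rightarrow> 'a set \<Rightarrow> real" where
  "completion_time c s f = sum_list (map c (takeWhile (\<lambda>g. g \<noteq> f) s)) + c f"

definition connection_time :: "'a set set \<Rightarrow> ('a set \<Rightarrow> real) \<Rightarrow> 'a set list \<Rightarrow> 'a \<Rightarrow> 'a \<Rightarrow> real" where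
  "connection_time E c s u v = Max (completion_time c s ` path_edges (tree_path E u v))"

text \<open>Connection time of an unordered pair p = {u,v}, u \<noteq> v (well defined
  since the v-u path is the reverse of the u-v path).\<close>
definition pair_connection_time :: "'a set set \<Rightarrow> ('a set \<Rightarrow> real) \<Rightarrow> 'a set list \<Rightarrow> 'a set \<Rightarrow> real" where
  "pair_connection_time E c s p = (THE t. \<exists>u v. p = {u, v} \<and> u \<noteq> v \<and> t = connection_time E c s u v)"

text \<open>Objective of Problem A for the (sub)tree (V,E): sum of w_p t_p over the
  r-pairs p (pairs of distinct vertices of V with positive weight).\<close>
definition cost :: "'a set \<Rightarrow> 'a set set \<Rightarrow> ('a set \<Rightarrow> real) \<Rightarrow> ('a set \<Rightarrow> real) \<Rightarrow> 'a set list \<Rightarrow> real" where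
  "cost V E c w s = (\<Sum>p\<in>{{u, v} | u v. u \<in> V \<and> v \<in> V \<and> u \<noteq> v \<and> w {u, v} > 0}.
      w p * pair_connection_time E c s p)"

definition optimal_A :: "'a set \<Rightarrow> 'a set set \<Rightarrow> ('a set \<Rightarrow> real) \<Rightarrow> ('a set \<Rightarrow> real) \<Rightarrow> 'a set list \<Rightarrow> bool" where
  "optimal_A V E c w s \<longleftrightarrow> s_sequence E s \<and>
     (\<forall>s'. s_sequence E s' \<longrightarrow> cost V E c w s \<le> cost V E c w s')"

definition optimal_A_last :: "'a set \<Rightarrow> 'a set set \<Rightarrow> ('a set \<Rightarrow> real) \<Rightarrow> ('a set \<Rightarrow> real) \<Rightarrow> 'a set \<Rightarrow> 'a set list \<Rightarrow> bool" where
  "optimal_A_last V E c w e s \<longleftrightarrow> s_sequence E s \<and> s \<noteq> [] \<and> last s = e \<and>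
     (\<forall>s'. s_sequence E s' \<and> s' \<noteq> [] \<and> last s' = e \<longrightarrow> cost V E c w s \<le> cost V E c w s')"

definition comp_vertices :: "'a set \<Rightarrow> 'a set set \<Rightarrow> 'a set \<Rightarrow> 'a \<Rightarrow> 'a set" where
  "comp_vertices V E e x = {y \<in> V. \<exists>xs. is_path (E - {e}) x y xs}"

definition comp_edges :: "'a set \<Rightarrow> 'a set set \<Rightarrow> 'a set \<Rightarrow> 'a \<Rightarrow> 'a set set" where
  "comp_edges V E e x = {f \<in> E - {e}. f \<subseteq> comp_vertices V E e x}"

end

(*
  Building the edges of a tree one after the other is a single-machine scheduling problem: edge f
  takes time c f, and if F S denotes the total weight of the r-pairs whose path lies in the set S of
  built edges, the cost of an s-sequence is the integral over time of the weight not yet connected.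
  F is supermodular, and for the edge sets E', E'' of the two subtrees it is separable,
  F S = F (S \<inter> E') + F (S \<inter> E''), as long as S avoids e.

  For separable supermodular profits, optimal orders of the two parts can always be merged into an
  optimal order of their union (a Sidney-type decomposition argument): the prefix of S(T') or of
  S(T'') that maximises weight per unit of time is ratio-maximal among all sets of edges, so it can
  be built first without loss, and what remains is a smaller instance of the same kind for the
  profit contracted by that prefix. Since e is built last, it only adds a constant to the cost.
*)
theory Submission
  imports Defs
begin

section \<open>Scheduling with a supermodular profit\<close>

definition preceding :: "'e list \<Rightarrow> 'e \<Rightarrow> 'e set" where
  "preceding s x = set (takeWhile (\<lambda>y. y \<noteq> x) s)"

lemma preceding_subset: "preceding s x \<subseteq> set s"
  unfolding preceding_def by (auto dest: set_takeWhileD)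

lemma not_in_preceding: "x \<notin> preceding s x"
  unfolding preceding_def by (auto dest: set_takeWhileD)

lemma finite_preceding [simp]: "finite (preceding s x)"
  unfolding preceding_def by simp

lemma preceding_Nil [simp]: "preceding [] x = {}"
  unfolding preceding_def by simp

lemma preceding_Cons: "preceding (z # zs) x = (if z = x then {} else insert z (preceding zs x))"
  unfolding preceding_def by (cases "z = x") simp_all

lemma preceding_filter: "P x \<Longrightarrow> preceding (filter P s) x = preceding s x \<inter> {y. P y}"
  by (induction s) (auto simp: preceding_Cons)

lemma preceding_append_notin: "x \<notin> set xs \<Longrightarrow> preceding (xs @ ys) x = set xs \<union> preceding ys x"
  by (induction xs) (auto simp: preceding_Cons)

lemma preceding_append_in: "x \<in> set xs \<Longrightarrow> preceding (xs @ ys) x = preceding xs x"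
  by (induction xs) (auto simp: preceding_Cons)

lemma preceding_asym:
  "distinct s \<Longrightarrow> x \<in> set s \<Longrightarrow> y \<in> set s \<Longrightarrow> x \<noteq> y \<Longrightarrow> x \<in> preceding s y \<longleftrightarrow> y \<notin> preceding s x"
  by (induction s) (auto simp: preceding_Cons dest: subsetD[OF preceding_subset])

lemma preceding_trans: "distinct s \<Longrightarrow> y \<in> preceding s z \<Longrightarrow> preceding s y \<subseteq> preceding s z"
  by (induction s) (auto simp: preceding_Cons split: if_splits dest: subsetD[OF preceding_subset])

lemma ex_last_in_list:
  assumes "distinct s" "P \<subseteq> set s" "P \<noteq> {}"
  shows "\<exists>g\<in>P. P \<subseteq> insert g (preceding s g)"
  using assms
proof (induction s arbitrary: P rule: rev_induct)
  case (snoc z s)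
  show ?case
  proof (cases "z \<in> P")
    case True
    have "preceding (s @ [z]) z = set s"
      using snoc.prems(1) by (simp add: preceding_append_notin preceding_Cons)
    then show ?thesis
      using True snoc.prems(2) by auto
  next
    case False
    then have P: "P \<subseteq> set s"
      using snoc.prems(2) by auto
    then have "\<exists>g\<in>P. P \<subseteq> insert g (preceding s g)"
      using snoc.IH snoc.prems(1,3) by simp
    then obtain g where g: "g \<in> P" "P \<subseteq> insert g (preceding s g)"
      by blast
    moreover have "preceding (s @ [z]) g = preceding s g"
      using g(1) P by (simp add: preceding_append_in subset_iff)
    ultimately show ?thesis
      by auto
  qed
qed simp

definition move_to_front :: "'e set \<Rightarrow> 'e list \<Rightarrow> 'e list" where
  "move_to_front T s = filter (\<lambda>x. x \<in> T) s @ filter (\<lambda>x. x \<notin> T) s"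

lemma set_move_to_front [simp]: "set (move_to_front T s) = set s"
  unfolding move_to_front_def by auto

lemma distinct_move_to_front [simp]: "distinct (move_to_front T s) \<longleftrightarrow> distinct s"
  unfolding move_to_front_def by (induction s) auto

lemma preceding_move_to_front_in:
  "x \<in> T \<Longrightarrow> x \<in> set s \<Longrightarrow> preceding (move_to_front T s) x = preceding s x \<inter> T"
  unfolding move_to_front_def by (auto simp: preceding_append_in preceding_filter)

lemma preceding_move_to_front_notin:
  "x \<notin> T \<Longrightarrow> T \<subseteq> set s \<Longrightarrow> preceding (move_to_front T s) x = preceding s x \<union> T"
  unfolding move_to_front_def by (auto simp: preceding_append_notin preceding_filter)

text \<open>Item \<open>x\<close> is processed during a time interval of length \<open>c x\<close> in which exactly the
  items of \<open>preceding s x\<close> are complete, so \<open>sched_cost f c U s\<close> is the integral over time of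
  the profit \<open>f U - f C\<close> still missing, \<open>C\<close> being the set of completed items.\<close>
definition sched_cost :: "('e set \<Rightarrow> real) \<Rightarrow> ('e \<Rightarrow> real) \<Rightarrow> 'e set \<Rightarrow> 'e list \<Rightarrow> real" where
  "sched_cost f c U s = (\<Sum>x\<in>U. c x * (f U - f (preceding s x)))"

definition optimal_order :: "('e set \<Rightarrow> real) \<Rightarrow> ('e \<Rightarrow> real) \<Rightarrow> 'e set \<Rightarrow> 'e list \<Rightarrow> bool" where
  "optimal_order f c U s \<longleftrightarrow> distinct s \<and> set s = U \<and>
     (\<forall>t. distinct t \<and> set t = U \<longrightarrow> sched_cost f c U s \<le> sched_cost f c U t)"

definition supermodular_on :: "'e set \<Rightarrow> ('e set \<Rightarrow> real) \<Rightarrow> bool" where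
  "supermodular_on U f \<longleftrightarrow> (\<forall>A B. A \<subseteq> U \<longrightarrow> B \<subseteq> U \<longrightarrow> f A + f B \<le> f (A \<union> B) + f (A \<inter> B))"

definition separable :: "('e set \<Rightarrow> real) \<Rightarrow> 'e set \<Rightarrow> 'e set \<Rightarrow> bool" where
  "separable f X Y \<longleftrightarrow> (\<forall>S \<subseteq> X \<union> Y. f S = f (S \<inter> X) + f (S \<inter> Y))"

definition contraction :: "('e set \<Rightarrow> real) \<Rightarrow> 'e set \<Rightarrow> 'e set \<Rightarrow> real" where
  "contraction f T S = f (S \<union> T) - f T"

definition max_ratio_set :: "('e set \<Rightarrow> real) \<Rightarrow> ('e \<Rightarrow> real) \<Rightarrow> 'e set \<Rightarrow> 'e set \<Rightarrow> bool" where
  "max_ratio_set f c U T \<longleftrightarrow> T \<subseteq> U \<and> T \<noteq> {} \<and> (\<forall>S \<subseteq> U. f S * sum c T \<le> f T * sum c S)"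

lemma sum_cross_preceding_swap:
  fixes c :: "'e \<Rightarrow> real"
  assumes "T \<subseteq> set s" "distinct s"
  shows "(\<Sum>x\<in>set s - T. c x * sum c (T - preceding s x)) = (\<Sum>y\<in>T. c y * sum c (preceding s y - T))"
proof -
  have finT: "finite T"
    using assms(1) finite_subset by blast
  have "(\<Sum>x\<in>set s - T. c x * sum c (T - preceding s x))
      = (\<Sum>x\<in>set s - T. \<Sum>y\<in>T. if y \<notin> preceding s x then c x * c y else 0)"
    using finT by (intro sum.cong refl) (simp add: sum_distrib_left sum.inter_filter[symmetric] set_diff_eq)
  also have "\<dots> = (\<Sum>y\<in>T. \<Sum>x\<in>set s - T. if y \<notin> preceding s x then c x * c y else 0)"
    by (rule sum.swap)
  also have "\<dots> = (\<Sum>y\<in>T. \<Sum>x\<in>set s - T. if x \<in> preceding s y then c x * c y else 0)"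
    using assms preceding_asym[OF assms(2)] by (intro sum.cong refl) auto
  also have "\<dots> = (\<Sum>y\<in>T. c y * sum c (preceding s y - T))"
  proof (intro sum.cong refl)
    fix y
    have "preceding s y - T = {x \<in> set s - T. x \<in> preceding s y}"
      using preceding_subset[of s y] by auto
    then have "sum c (preceding s y - T) = (\<Sum>x\<in>set s - T. if x \<in> preceding s y then c x else 0)"
      by (metis (no_types) finite_Diff finite_set sum.inter_filter)
    then show "(\<Sum>x\<in>set s - T. if x \<in> preceding s y then c x * c y else 0) = c y * sum c (preceding s y - T)"
      by (simp add: sum_distrib_left mult.commute if_distrib cong: if_cong)
  qed
  finally show ?thesis .
qed

lemma sched_cost_move_to_front_diff:
  assumes "distinct s" "set s = U" "T \<subseteq> U"
  shows "sched_cost f c U s - sched_cost f c U (move_to_front T s)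
    = (\<Sum>x\<in>U-T. c x * (f (preceding s x \<union> T) - f (preceding s x)))
      + (\<Sum>x\<in>T. c x * (f (preceding s x \<inter> T) - f (preceding s x)))"
proof -
  let ?t = "move_to_front T s"
  have finU: "finite U"
    using assms(2) by auto
  have "sched_cost f c U s - sched_cost f c U ?t = (\<Sum>x\<in>U. c x * (f (preceding ?t x) - f (preceding s x)))"
    unfolding sched_cost_def by (simp add: sum_subtractf[symmetric] algebra_simps)
  also have "\<dots> = (\<Sum>x\<in>U-T. c x * (f (preceding ?t x) - f (preceding s x)))
      + (\<Sum>x\<in>T. c x * (f (preceding ?t x) - f (preceding s x)))"
    using sum.subset_diff[OF assms(3) finU] by simp
  finally show ?thesis
    using assms(2,3) by (auto simp: preceding_move_to_front_in preceding_move_to_front_notin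
        intro!: sum.cong arg_cong2[where f = "(+)"])
qed

text \<open>By supermodularity, moving \<open>T\<close> to the front costs each item \<open>x \<notin> T\<close> at most
  \<open>c x * l * sum c (T - preceding s x)\<close>. Regrouped by the items of \<open>T\<close>
  (\<open>sum_cross_preceding_swap\<close>), these losses are outweighed by the gains of the items of \<open>T\<close>,
  because \<open>T\<close> attains the bound \<open>f \<le> l * sum c\<close>.\<close>
lemma sched_cost_move_to_front:
  fixes f :: "'e set \<Rightarrow> real" and c :: "'e \<Rightarrow> real"
  assumes s: "distinct s" "set s = U" and TU: "T \<subseteq> U" and sm: "supermodular_on U f"
    and bound: "\<forall>S\<subseteq>U. f S \<le> l * sum c S" and fT: "f T = l * sum c T"
    and c0: "\<forall>x\<in>U. 0 \<le> c x"
  shows "sched_cost f c U (move_to_front T s)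
      + (\<Sum>x\<in>T. c x * (l * sum c (preceding s x \<union> T) - f (preceding s x \<union> T)))
      \<le> sched_cost f c U s"
proof -
  let ?p = "preceding s"
  have finT: "finite T"
    using s(2) TU finite_subset by auto
  have pU: "?p x \<subseteq> U" for x
    using preceding_subset[of s x] s(2) by simp
  have sm_at: "f (?p x) + f T \<le> f (?p x \<union> T) + f (?p x \<inter> T)" for x
    using sm pU TU unfolding supermodular_on_def by blast
  have "sched_cost f c U s - sched_cost f c U (move_to_front T s)
    = (\<Sum>x\<in>U-T. c x * (f (?p x \<union> T) - f (?p x))) + (\<Sum>x\<in>T. c x * (f (?p x \<inter> T) - f (?p x)))"
    by (rule sched_cost_move_to_front_diff[OF s TU])
  also have "\<dots> \<ge> (\<Sum>x\<in>U-T. c x * (l * sum c (T - ?p x))) + (\<Sum>x\<in>T. c x * (f T - f (?p x \<union> T)))"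
  proof (rule add_mono; rule sum_mono)
    fix x assume x: "x \<in> U - T"
    have "T - ?p x = T - ?p x \<inter> T"
      by blast
    then have "sum c (T - ?p x) = sum c T - sum c (?p x \<inter> T)"
      using sum_diff[OF finT, of "?p x \<inter> T" c] by simp
    moreover have "f (?p x \<inter> T) \<le> l * sum c (?p x \<inter> T)"
      using bound le_infI1[OF pU] by blast
    ultimately have "l * sum c (T - ?p x) \<le> f (?p x \<union> T) - f (?p x)"
      using sm_at[of x] fT by (simp add: right_diff_distrib)
    then show "c x * (l * sum c (T - ?p x)) \<le> c x * (f (?p x \<union> T) - f (?p x))"
      using c0 x by (simp add: mult_left_mono)
  next
    fix x assume x: "x \<in> T"
    have "f T - f (?p x \<union> T) \<le> f (?p x \<inter> T) - f (?p x)"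
      using sm_at[of x] by simp
    then show "c x * (f T - f (?p x \<union> T)) \<le> c x * (f (?p x \<inter> T) - f (?p x))"
      using c0 x TU by (simp add: mult_left_mono subset_iff)
  qed
  also have "(\<Sum>x\<in>U-T. c x * (l * sum c (T - ?p x))) = l * (\<Sum>x\<in>U-T. c x * sum c (T - ?p x))"
    by (simp add: sum_distrib_left mult.left_commute)
  also have "\<dots> = (\<Sum>y\<in>T. c y * (l * sum c (?p y - T)))"
    using sum_cross_preceding_swap[of T s c] s TU by (simp add: sum_distrib_left mult.left_commute)
  also have "\<dots> + (\<Sum>x\<in>T. c x * (f T - f (?p x \<union> T)))
      = (\<Sum>x\<in>T. c x * (l * sum c (?p x \<union> T) - f (?p x \<union> T)))"
  proof -
    have "sum c (?p x \<union> T) = sum c (?p x - T) + sum c T" for x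
      using sum.union_disjoint[of "?p x - T" T c] finT by (simp add: Int_commute)
    then have "c x * (l * sum c (?p x - T)) + c x * (f T - f (?p x \<union> T))
        = c x * (l * sum c (?p x \<union> T) - f (?p x \<union> T))" for x
      using fT by (simp add: algebra_simps)
    then show ?thesis
      by (simp add: sum.distrib[symmetric])
  qed
  finally show ?thesis
    by simp
qed

lemma sched_cost_move_to_front_le:
  fixes f :: "'e set \<Rightarrow> real" and c :: "'e \<Rightarrow> real"
  assumes s: "distinct s" "set s = U" and TU: "T \<subseteq> U" and sm: "supermodular_on U f"
    and bound: "\<forall>S\<subseteq>U. f S \<le> l * sum c S" and fT: "f T = l * sum c T"
    and c0: "\<forall>x\<in>U. 0 \<le> c x"
  shows "sched_cost f c U (move_to_front T s) \<le> sched_cost f c U s"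
    and "y \<in> T \<Longrightarrow> sched_cost f c U (move_to_front T s)
      + c y * (l * sum c (preceding s y \<union> T) - f (preceding s y \<union> T)) \<le> sched_cost f c U s"
proof -
  let ?gain = "\<lambda>x. c x * (l * sum c (preceding s x \<union> T) - f (preceding s x \<union> T))"
  have gain: "0 \<le> ?gain x" if "x \<in> T" for x
  proof -
    have "preceding s x \<union> T \<subseteq> U"
      using preceding_subset[of s x] s(2) TU by auto
    then show ?thesis
      using bound c0 TU that by (intro mult_nonneg_nonneg) auto
  qed
  have total: "sched_cost f c U (move_to_front T s) + sum ?gain T \<le> sched_cost f c U s"
    by (rule sched_cost_move_to_front[OF assms])
  moreover have "0 \<le> sum ?gain T"
    using gain by (rule sum_nonneg)
  ultimately show "sched_cost f c U (move_to_front T s) \<le> sched_cost f c U s"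
    by linarith
  assume "y \<in> T"
  then have "?gain y \<le> sum ?gain T"
    using gain finite_subset[OF TU] s(2) by (intro member_le_sum) auto
  then show "sched_cost f c U (move_to_front T s) + ?gain y \<le> sched_cost f c U s"
    using total by linarith
qed

lemma sched_cost_append:
  fixes f :: "'e set \<Rightarrow> real" and c :: "'e \<Rightarrow> real"
  assumes "distinct (a @ b)" "set a = T" "set b = R"
  shows "sched_cost f c (T \<union> R) (a @ b)
    = sched_cost f c T a + sum c T * (f (T \<union> R) - f T) + sched_cost (contraction f T) c R b"
proof -
  have disj: "T \<inter> R = {}" and fin: "finite T" "finite R"
    using assms by auto
  have "sched_cost f c (T \<union> R) (a @ b) = (\<Sum>x\<in>T. c x * (f (T \<union> R) - f (preceding (a @ b) x)))
      + (\<Sum>x\<in>R. c x * (f (T \<union> R) - f (preceding (a @ b) x)))"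
    unfolding sched_cost_def using fin disj by (simp add: sum.union_disjoint)
  also have "(\<Sum>x\<in>T. c x * (f (T \<union> R) - f (preceding (a @ b) x)))
      = (\<Sum>x\<in>T. c x * (f T - f (preceding a x)) + c x * (f (T \<union> R) - f T))"
    using assms(2) by (intro sum.cong) (auto simp: preceding_append_in algebra_simps)
  also have "\<dots> = sched_cost f c T a + sum c T * (f (T \<union> R) - f T)"
    unfolding sched_cost_def by (simp add: sum.distrib sum_distrib_right)
  also have "(\<Sum>x\<in>R. c x * (f (T \<union> R) - f (preceding (a @ b) x))) = sched_cost (contraction f T) c R b"
    unfolding sched_cost_def contraction_def
    using assms disj by (intro sum.cong) (auto simp: preceding_append_notin Un_commute)
  finally show ?thesis .
qed

lemma optimal_order_append:
  assumes opt: "optimal_order f c (T \<union> R) (a @ b)" and a: "set a = T" and b: "set b = R"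
  shows "optimal_order f c T a" "optimal_order (contraction f T) c R b"
proof -
  have d: "distinct (a @ b)"
    using opt unfolding optimal_order_def by simp
  have le: "sched_cost f c (T \<union> R) (a @ b) \<le> sched_cost f c (T \<union> R) (g @ h)"
    if "distinct (g @ h)" "set g = T" "set h = R" for g h
    using opt that unfolding optimal_order_def by auto
  show "optimal_order f c T a"
    unfolding optimal_order_def
  proof (intro conjI allI impI)
    fix g assume g: "distinct g \<and> set g = T"
    then have "distinct (g @ b)"
      using d a by auto
    then show "sched_cost f c T a \<le> sched_cost f c T g"
      using le[of g b] g sched_cost_append[OF d a b, of f c] sched_cost_append[of g b T R f c] b
      by simp
  qed (use d a in auto)
  show "optimal_order (contraction f T) c R b"
    unfolding optimal_order_def
  proof (intro conjI allI impI)
    fix h assume h: "distinct h \<and> set h = R"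
    then have "distinct (a @ h)"
      using d b by auto
    then show "sched_cost (contraction f T) c R b \<le> sched_cost (contraction f T) c R h"
      using le[of a h] h sched_cost_append[OF d a b, of f c] sched_cost_append[of a h T R f c] a
      by simp
  qed (use d b in auto)
qed

lemma max_ratio_setD:
  assumes "max_ratio_set f c U T" "finite U" "\<forall>x\<in>U. 0 < c x"
  shows "0 < sum c T" "T \<subseteq> U" "S \<subseteq> U \<Longrightarrow> f S \<le> f T / sum c T * sum c S"
proof -
  show T: "T \<subseteq> U" and pos: "0 < sum c T"
    using assms finite_subset by (auto simp: max_ratio_set_def intro!: sum_pos)
  assume "S \<subseteq> U"
  then have "f S * sum c T \<le> f T * sum c S"
    using assms(1) unfolding max_ratio_set_def by blast
  then show "f S \<le> f T / sum c T * sum c S"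
    using pos by (simp add: field_simps)
qed

lemma max_ratio_setI:
  assumes "P \<subseteq> U" "P \<noteq> {}" "\<forall>S\<subseteq>U. f S \<le> l * sum c S" "f P = l * sum c P" "\<forall>x\<in>U. 0 \<le> c x"
  shows "max_ratio_set f c U P"
  unfolding max_ratio_set_def
proof (intro conjI allI impI)
  fix S assume "S \<subseteq> U"
  moreover have "0 \<le> sum c P"
    using assms(1,5) by (intro sum_nonneg) auto
  ultimately have "f S * sum c P \<le> l * sum c S * sum c P"
    using assms(3) by (simp add: mult_right_mono)
  then show "f S * sum c P \<le> f P * sum c S"
    using assms(4) by (simp add: algebra_simps)
qed (use assms in auto)

lemma optimal_order_append_max_ratio:
  assumes T: "max_ratio_set f c (T \<union> R) T" and disj: "T \<inter> R = {}"
    and sm: "supermodular_on (T \<union> R) f" and cpos: "\<forall>x\<in>T \<union> R. 0 < c x"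
    and a: "optimal_order f c T a" and b: "optimal_order (contraction f T) c R b"
  shows "optimal_order f c (T \<union> R) (a @ b)"
  unfolding optimal_order_def
proof (intro conjI allI impI)
  have sa: "set a = T" and sb: "set b = R" and da: "distinct a" and db: "distinct b"
    using a b unfolding optimal_order_def by auto
  then show d: "distinct (a @ b)" "set (a @ b) = T \<union> R"
    using disj by auto
  fix t assume t: "distinct t \<and> set t = T \<union> R"
  define g where "g = filter (\<lambda>x. x \<in> T) t"
  define h where "h = filter (\<lambda>x. x \<notin> T) t"
  have g: "distinct g" "set g = T" and h: "distinct h" "set h = R" and dgh: "distinct (g @ h)"
    using t disj unfolding g_def h_def by auto
  have fin: "finite (T \<union> R)"
    using t by (metis finite_set)
  let ?l = "f T / sum c T"
  have "sched_cost f c (T \<union> R) (a @ b)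
      = sched_cost f c T a + sum c T * (f (T \<union> R) - f T) + sched_cost (contraction f T) c R b"
    by (rule sched_cost_append[OF d(1) sa sb])
  also have "\<dots> \<le> sched_cost f c T g + sum c T * (f (T \<union> R) - f T) + sched_cost (contraction f T) c R h"
    using a b g h unfolding optimal_order_def by (auto intro: add_mono)
  also have "\<dots> = sched_cost f c (T \<union> R) (move_to_front T t)"
    using sched_cost_append[OF dgh g(2) h(2)] unfolding move_to_front_def g_def h_def by simp
  also have "\<dots> \<le> sched_cost f c (T \<union> R) t"
    using max_ratio_setD[OF T fin cpos] t sm cpos less_imp_le
    by (intro sched_cost_move_to_front_le(1)[where l = ?l]) auto
  finally show "sched_cost f c (T \<union> R) (a @ b) \<le> sched_cost f c (T \<union> R) t" .
qed

lemma optimal_order_cong: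
  assumes "\<And>S. S \<subseteq> U \<Longrightarrow> f S = g S"
  shows "optimal_order f c U s \<longleftrightarrow> optimal_order g c U s"
proof -
  have "sched_cost f c U t = sched_cost g c U t" if "set t = U" for t
    unfolding sched_cost_def using assms preceding_subset[of t] that by (intro sum.cong) auto
  then show ?thesis
    unfolding optimal_order_def by auto
qed

lemma supermodular_on_subset: "supermodular_on U f \<Longrightarrow> V \<subseteq> U \<Longrightarrow> supermodular_on V f"
  unfolding supermodular_on_def by (meson subset_trans)

lemma supermodular_on_contraction:
  assumes "supermodular_on (R \<union> T) f"
  shows "supermodular_on R (contraction f T)"
  unfolding supermodular_on_def contraction_def
proof (intro allI impI)
  fix A B assume "A \<subseteq> R" "B \<subseteq> R"
  then have "f (A \<union> T) + f (B \<union> T) \<le> f ((A \<union> T) \<union> (B \<union> T)) + f ((A \<union> T) \<inter> (B \<union> T))"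
    using assms unfolding supermodular_on_def by (meson Un_mono subset_refl)
  moreover have "(A \<union> T) \<union> (B \<union> T) = (A \<union> B) \<union> T" "(A \<union> T) \<inter> (B \<union> T) = (A \<inter> B) \<union> T"
    by auto
  ultimately show "f (A \<union> T) - f T + (f (B \<union> T) - f T) \<le> f (A \<union> B \<union> T) - f T + (f (A \<inter> B \<union> T) - f T)"
    by simp
qed

lemma separable_commute: "separable f X Y \<Longrightarrow> separable f Y X"
  unfolding separable_def by (simp add: Un_commute add.commute)

lemma separable_empty: "separable f X Y \<Longrightarrow> f {} = 0"
  unfolding separable_def by (metis add_cancel_left_left empty_subsetI inf_bot_left)

lemma contraction_eq_on_other_part:
  assumes "separable f X Y" "X \<inter> Y = {}" "T \<subseteq> X" "S \<subseteq> Y"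
  shows "contraction f T S = f S"
proof -
  have "S \<union> T \<subseteq> X \<union> Y"
    using assms(3,4) by blast
  then have "f (S \<union> T) = f ((S \<union> T) \<inter> X) + f ((S \<union> T) \<inter> Y)"
    using assms(1) unfolding separable_def by blast
  moreover have "(S \<union> T) \<inter> X = T" "(S \<union> T) \<inter> Y = S"
    using assms(2-4) by auto
  ultimately show ?thesis
    unfolding contraction_def by simp
qed

lemma optimal_order_contraction_other_part:
  assumes "separable f X Y" "X \<inter> Y = {}" "T \<subseteq> X" "optimal_order f c Y \<tau>"
  shows "optimal_order (contraction f T) c Y \<tau>"
  using assms(4) optimal_order_cong[of Y "contraction f T" f c \<tau>] contraction_eq_on_other_part[OF assms(1-3)]
  by auto

lemma separable_contraction:
  assumes sep: "separable f X Y" and disj: "X \<inter> Y = {}" and TX: "T \<subseteq> X"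
  shows "separable (contraction f T) (X - T) Y"
  unfolding separable_def
proof (intro allI impI)
  fix S assume S: "S \<subseteq> X - T \<union> Y"
  have "S \<union> T \<subseteq> X \<union> Y"
    using S TX by blast
  then have "f (S \<union> T) = f ((S \<union> T) \<inter> X) + f ((S \<union> T) \<inter> Y)"
    using sep unfolding separable_def by blast
  moreover have "(S \<union> T) \<inter> X = (S \<inter> (X - T)) \<union> T" "(S \<union> T) \<inter> Y = S \<inter> Y"
    using S TX disj by auto
  moreover have "contraction f T (S \<inter> Y) = f (S \<inter> Y)"
    using contraction_eq_on_other_part[OF sep disj TX] by blast
  ultimately show "contraction f T S = contraction f T (S \<inter> (X - T)) + contraction f T (S \<inter> Y)"
    unfolding contraction_def by simp
qed

lemma ex_max_ratio_set:
  fixes f :: "'e set \<Rightarrow> real" and c :: "'e \<Rightarrow> real"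
  assumes fin: "finite U" and ne: "U \<noteq> {}" and f0: "f {} = 0" and cpos: "\<forall>x\<in>U. 0 < c x"
  shows "\<exists>T. max_ratio_set f c U T"
proof -
  define M where "M = {S. S \<subseteq> U \<and> S \<noteq> {}}"
  have "finite M" "M \<noteq> {}"
    using fin ne unfolding M_def by auto
  then obtain T where T: "T \<in> M" and Tmax: "Max ((\<lambda>S. f S / sum c S) ` M) = f T / sum c T"
    by (rule obtains_MAX)
  have pos: "0 < sum c S" if "S \<in> M" for S
    using that fin cpos finite_subset unfolding M_def by (auto intro!: sum_pos)
  have "f S * sum c T \<le> f T * sum c S" if "S \<subseteq> U" for S
  proof (cases "S = {}")
    case False
    then have "f S / sum c S \<le> f T / sum c T"
      using that \<open>finite M\<close> Tmax unfolding M_def by (metis (mono_tags, lifting) Max_ge finite_imageI image_eqI mem_Collect_eq)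
    then show ?thesis
      using pos[of S] pos[OF T] that False unfolding M_def by (simp add: field_simps)
  qed (simp add: f0)
  then show ?thesis
    using T unfolding M_def max_ratio_set_def by blast
qed

text \<open>Let \<open>y\<close> be the last item of a ratio-maximal set \<open>T\<close>. If the prefix ending with \<open>y\<close>
  were not ratio-maximal, moving \<open>T\<close> to the front would strictly decrease the cost.\<close>
lemma optimal_order_max_ratio_prefix:
  fixes f :: "'e set \<Rightarrow> real" and c :: "'e \<Rightarrow> real"
  assumes opt: "optimal_order f c U s" and ne: "U \<noteq> {}" and sm: "supermodular_on U f"
    and f0: "f {} = 0" and cpos: "\<forall>x\<in>U. 0 < c x"
  shows "\<exists>y\<in>U. max_ratio_set f c U (insert y (preceding s y))"
proof -
  have ds: "distinct s" and ss: "set s = U"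
    using opt unfolding optimal_order_def by auto
  then have fin: "finite U"
    by auto
  obtain T where T: "max_ratio_set f c U T"
    using ex_max_ratio_set[of U f c] fin ne f0 cpos by blast
  define l where "l = f T / sum c T"
  have TU: "T \<subseteq> U" and cT: "0 < sum c T" and bound: "\<forall>S\<subseteq>U. f S \<le> l * sum c S"
    using max_ratio_setD[OF T fin cpos] unfolding l_def by auto
  have fT: "f T = l * sum c T"
    unfolding l_def using cT by simp
  have "T \<subseteq> set s" "T \<noteq> {}"
    using TU ss T unfolding max_ratio_set_def by auto
  then obtain y where yT: "y \<in> T" and Ty: "T \<subseteq> insert y (preceding s y)"
    using ex_last_in_list[OF ds] by blast
  define P where "P = insert y (preceding s y)"
  have yU: "y \<in> U" and PU: "P \<subseteq> U" and PT: "preceding s y \<union> T = P"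
    using yT TU Ty preceding_subset[of s y] ss unfolding P_def by auto
  have fP: "f P = l * sum c P"
  proof (rule ccontr)
    assume "f P \<noteq> l * sum c P"
    then have "f P < l * sum c P"
      using bound PU by (simp add: order.not_eq_order_implies_strict)
    then have "0 < c y * (l * sum c (preceding s y \<union> T) - f (preceding s y \<union> T))"
      using PT cpos yU by simp
    moreover have "sched_cost f c U (move_to_front T s)
        + c y * (l * sum c (preceding s y \<union> T) - f (preceding s y \<union> T)) \<le> sched_cost f c U s"
      using cpos yT by (intro sched_cost_move_to_front_le(2)[OF ds ss TU sm bound fT]) (simp_all add: less_imp_le)
    moreover have "sched_cost f c U s \<le> sched_cost f c U (move_to_front T s)"
      using opt ds ss unfolding optimal_order_def by simp
    ultimately show False
      by linarith
  qed
  then have "max_ratio_set f c U P"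
    using PU bound cpos by (intro max_ratio_setI[where l = l]) (auto simp: P_def less_imp_le)
  then show ?thesis
    using yU unfolding P_def by blast
qed

lemma max_ratio_set_Un:
  fixes f :: "'e set \<Rightarrow> real" and c :: "'e \<Rightarrow> real"
  assumes sep: "separable f X Y" and disj: "X \<inter> Y = {}" and fin: "finite X" "finite Y"
    and cpos: "\<forall>x\<in>X \<union> Y. 0 < c x"
    and TX: "max_ratio_set f c X TX" and TY: "max_ratio_set f c Y TY"
    and le: "f TY * sum c TX \<le> f TX * sum c TY"
  shows "max_ratio_set f c (X \<union> Y) TX"
proof -
  define rX where "rX = f TX / sum c TX"
  define rY where "rY = f TY / sum c TY"
  note X = max_ratio_setD[OF TX fin(1)] and Y = max_ratio_setD[OF TY fin(2)]
  have pX: "0 < sum c TX" and pY: "0 < sum c TY"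
    using X(1) Y(1) cpos by auto
  have "rY \<le> rX"
    unfolding rX_def rY_def using pX pY le by (simp add: field_simps)
  have "f S * sum c TX \<le> f TX * sum c S" if S: "S \<subseteq> X \<union> Y" for S
  proof -
    have "f (S \<inter> X) \<le> rX * sum c (S \<inter> X)" "f (S \<inter> Y) \<le> rY * sum c (S \<inter> Y)"
      using X(3) Y(3) cpos unfolding rX_def rY_def by auto
    moreover have "rY * sum c (S \<inter> Y) \<le> rX * sum c (S \<inter> Y)"
      using \<open>rY \<le> rX\<close> cpos S by (intro mult_right_mono sum_nonneg) (auto simp: less_imp_le)
    moreover have "sum c S = sum c (S \<inter> X) + sum c (S \<inter> Y)"
    proof -
      have "S = (S \<inter> X) \<union> (S \<inter> Y)"
        using S by blast
      then show ?thesis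
        using disj fin sum.union_disjoint[of "S \<inter> X" "S \<inter> Y" c] by auto
    qed
    moreover have "f S = f (S \<inter> X) + f (S \<inter> Y)"
      using sep S unfolding separable_def by blast
    ultimately have "f S \<le> rX * sum c S"
      by (simp add: algebra_simps)
    then show ?thesis
      unfolding rX_def using pX by (simp add: field_simps)
  qed
  then show ?thesis
    using TX unfolding max_ratio_set_def by blast
qed

section \<open>Merging optimal orders\<close>

definition mergeable :: "('e set \<Rightarrow> real) \<Rightarrow> ('e \<Rightarrow> real) \<Rightarrow> 'e set \<Rightarrow> 'e set \<Rightarrow> bool" where
  "mergeable f c X Y \<longleftrightarrow> (\<forall>\<sigma> \<tau>. optimal_order f c X \<sigma> \<longrightarrow> optimal_order f c Y \<tau> \<longrightarrow>
     (\<exists>s. optimal_order f c (X \<union> Y) s \<and> filter (\<lambda>x. x \<in> X) s = \<sigma> \<and> filter (\<lambda>x. x \<in> Y) s = \<tau>))"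

lemma mergeable_commute: "mergeable f c X Y \<Longrightarrow> mergeable f c Y X"
  unfolding mergeable_def by (metis Un_commute)

lemma merge_by_max_ratio_prefix:
  fixes f :: "'e set \<Rightarrow> real" and c :: "'e \<Rightarrow> real"
  assumes IH: "\<And>X' g. X' \<subset> X \<Longrightarrow> supermodular_on (X' \<union> Y) g \<Longrightarrow> separable g X' Y \<Longrightarrow> mergeable g c X' Y"
    and disj: "X \<inter> Y = {}" and cpos: "\<forall>x\<in>X \<union> Y. 0 < c x"
    and sm: "supermodular_on (X \<union> Y) f" and sep: "separable f X Y"
    and \<sigma>: "optimal_order f c X \<sigma>" and \<tau>: "optimal_order f c Y \<tau>"
    and y: "y \<in> X" and T: "max_ratio_set f c (X \<union> Y) (insert y (preceding \<sigma> y))"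
  shows "\<exists>s. optimal_order f c (X \<union> Y) s \<and> filter (\<lambda>x. x \<in> X) s = \<sigma> \<and> filter (\<lambda>x. x \<in> Y) s = \<tau>"
proof -
  have d\<sigma>: "distinct \<sigma>" and s\<sigma>: "set \<sigma> = X"
    using \<sigma> unfolding optimal_order_def by auto
  obtain ys zs where \<sigma>_split: "\<sigma> = ys @ y # zs" and "y \<notin> set ys"
    using split_list_first[of y \<sigma>] y s\<sigma> by auto
  define a where "a = ys @ [y]"
  define T where "T = set a"
  have \<sigma>a: "\<sigma> = a @ zs"
    unfolding a_def \<sigma>_split by simp
  have T_eq: "T = insert y (preceding \<sigma> y)"
    unfolding T_def a_def \<sigma>_split using \<open>y \<notin> set ys\<close> by (auto simp: preceding_append_notin preceding_Cons)
  have TX: "T \<subseteq> X" and zs: "set zs = X - T" and XT: "T \<union> (X - T) = X"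
    using d\<sigma> s\<sigma> \<sigma>a unfolding T_def by auto
  have UT: "T \<union> (X - T \<union> Y) = X \<union> Y" "X - T \<union> Y \<union> T = X \<union> Y"
    using TX by auto
  have "optimal_order f c (T \<union> (X - T)) (a @ zs)"
    using \<sigma> \<sigma>a XT by simp
  then have a_opt: "optimal_order f c T a" and zs_opt: "optimal_order (contraction f T) c (X - T) zs"
    using optimal_order_append[OF _ T_def[symmetric] zs] by auto
  have \<tau>_opt: "optimal_order (contraction f T) c Y \<tau>"
    by (rule optimal_order_contraction_other_part[OF sep disj TX \<tau>])
  have "X - T \<subset> X"
    using y T_eq by auto
  moreover have "supermodular_on (X - T \<union> Y) (contraction f T)"
    using sm UT(2) by (intro supermodular_on_contraction) simp
  ultimately have "mergeable (contraction f T) c (X - T) Y"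
    using IH separable_contraction[OF sep disj TX] by blast
  then obtain s2 where s2: "optimal_order (contraction f T) c (X - T \<union> Y) s2"
    and s2X: "filter (\<lambda>x. x \<in> X - T) s2 = zs" and s2Y: "filter (\<lambda>x. x \<in> Y) s2 = \<tau>"
    using zs_opt \<tau>_opt unfolding mergeable_def by blast
  have "T \<inter> (X - T \<union> Y) = {}"
    using TX disj by auto
  then have "optimal_order f c (T \<union> (X - T \<union> Y)) (a @ s2)"
    using T T_eq UT(1) sm cpos by (intro optimal_order_append_max_ratio[OF _ _ _ _ a_opt s2]) simp_all
  moreover have "filter (\<lambda>x. x \<in> X) (a @ s2) = \<sigma>"
  proof -
    have "filter (\<lambda>x. x \<in> X) s2 = filter (\<lambda>x. x \<in> X - T) s2"
      using s2 disj unfolding optimal_order_def by (intro filter_cong) auto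
    then show ?thesis
      using TX s2X \<sigma>a unfolding T_def by (simp add: subset_iff)
  qed
  moreover have "filter (\<lambda>x. x \<in> Y) (a @ s2) = \<tau>"
    using TX disj s2Y unfolding T_def by (auto simp: filter_empty_conv)
  ultimately show ?thesis
    using UT(1) by auto
qed

lemma mergeable_empty: "mergeable f c {} Y"
  unfolding mergeable_def optimal_order_def by (auto simp: filter_id_conv)

lemma max_ratio_prefix_Un:
  fixes f :: "'e set \<Rightarrow> real" and c :: "'e \<Rightarrow> real"
  assumes fin: "finite X" "finite Y" and disj: "X \<inter> Y = {}" and cpos: "\<forall>x\<in>X \<union> Y. 0 < c x"
    and sm: "supermodular_on (X \<union> Y) f" and sep: "separable f X Y"
    and \<sigma>: "optimal_order f c X \<sigma>" and \<tau>: "optimal_order f c Y \<tau>" and ne: "X \<noteq> {}" "Y \<noteq> {}"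
  shows "(\<exists>y\<in>X. max_ratio_set f c (X \<union> Y) (insert y (preceding \<sigma> y)))
    \<or> (\<exists>z\<in>Y. max_ratio_set f c (X \<union> Y) (insert z (preceding \<tau> z)))"
proof -
  have f0: "f {} = 0"
    using sep by (rule separable_empty)
  obtain y where y: "y \<in> X" and TX: "max_ratio_set f c X (insert y (preceding \<sigma> y))"
    using optimal_order_max_ratio_prefix[OF \<sigma>] ne supermodular_on_subset[OF sm] f0 cpos by blast
  obtain z where z: "z \<in> Y" and TY: "max_ratio_set f c Y (insert z (preceding \<tau> z))"
    using optimal_order_max_ratio_prefix[OF \<tau>] ne supermodular_on_subset[OF sm] f0 cpos by blast
  show ?thesis
  proof (cases "f (insert z (preceding \<tau> z)) * sum c (insert y (preceding \<sigma> y))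
      \<le> f (insert y (preceding \<sigma> y)) * sum c (insert z (preceding \<tau> z))")
    case True
    then show ?thesis
      using max_ratio_set_Un[OF sep disj fin cpos TX TY] y by blast
  next
    case False
    have "Y \<inter> X = {}" and "\<forall>x\<in>Y \<union> X. 0 < c x"
      using disj cpos by auto
    then have "max_ratio_set f c (Y \<union> X) (insert z (preceding \<tau> z))"
      using False by (intro max_ratio_set_Un[OF separable_commute[OF sep] _ fin(2,1) _ TY TX]) simp_all
    then show ?thesis
      using z by (auto simp: Un_commute)
  qed
qed

theorem mergeable_if_separable:
  fixes f :: "'e set \<Rightarrow> real" and c :: "'e \<Rightarrow> real"
  assumes "finite X" "finite Y" "X \<inter> Y = {}" "\<forall>x\<in>X \<union> Y. 0 < c x"
    and "supermodular_on (X \<union> Y) f" "separable f X Y"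
  shows "mergeable f c X Y"
  using assms
proof (induction "card (X \<union> Y)" arbitrary: X Y f rule: less_induct)
  case less
  note fin = less.prems(1,2) and disj = less.prems(3) and cpos = less.prems(4)
    and sm = less.prems(5) and sep = less.prems(6)
  have IH: "mergeable g c X' Y'"
    if "X' \<subseteq> X" "Y' \<subseteq> Y" "X' \<union> Y' \<noteq> X \<union> Y" "supermodular_on (X' \<union> Y') g" "separable g X' Y'"
    for X' Y' g
  proof (rule less.hyps)
    have "X' \<union> Y' \<subset> X \<union> Y"
      using that(1-3) by blast
    then show "card (X' \<union> Y') < card (X \<union> Y)"
      using fin by (simp add: psubset_card_mono)
  qed (use that fin disj cpos in \<open>auto intro: rev_finite_subset\<close>)
  consider "X = {}" | "Y = {}" | "X \<noteq> {}" "Y \<noteq> {}"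
    by blast
  then show ?case
  proof cases
    case 3
    show ?thesis
      unfolding mergeable_def
    proof (intro allI impI)
      fix \<sigma> \<tau> assume \<sigma>: "optimal_order f c X \<sigma>" and \<tau>: "optimal_order f c Y \<tau>"
      from max_ratio_prefix_Un[OF fin disj cpos sm sep \<sigma> \<tau> 3]
      show "\<exists>s. optimal_order f c (X \<union> Y) s \<and> filter (\<lambda>x. x \<in> X) s = \<sigma> \<and> filter (\<lambda>x. x \<in> Y) s = \<tau>"
      proof (elim disjE bexE)
        fix y assume "y \<in> X" "max_ratio_set f c (X \<union> Y) (insert y (preceding \<sigma> y))"
        moreover have "mergeable g c X' Y" if "X' \<subset> X" "supermodular_on (X' \<union> Y) g" "separable g X' Y" for X' g
          using IH[of X' Y g] that disj by blast
        ultimately show ?thesis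
          using merge_by_max_ratio_prefix[of X Y c f \<sigma> \<tau> y] disj cpos sm sep \<sigma> \<tau> by blast
      next
        fix z assume "z \<in> Y" "max_ratio_set f c (X \<union> Y) (insert z (preceding \<tau> z))"
        moreover have "mergeable g c Y' X" if "Y' \<subset> Y" "supermodular_on (Y' \<union> X) g" "separable g Y' X" for Y' g
          by (rule mergeable_commute[OF IH]) (use that disj separable_commute in \<open>auto simp: Un_commute\<close>)
        ultimately have "\<exists>s. optimal_order f c (Y \<union> X) s \<and> filter (\<lambda>x. x \<in> Y) s = \<tau> \<and> filter (\<lambda>x. x \<in> X) s = \<sigma>"
          using merge_by_max_ratio_prefix[of Y X c f \<tau> \<sigma> z] disj cpos sm separable_commute[OF sep] \<sigma> \<tau>
          by (simp add: Un_commute Int_commute)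
        then show ?thesis
          by (metis Un_commute)
      qed
    qed
  qed (simp_all add: mergeable_empty mergeable_commute)
qed

section \<open>Paths in trees\<close>

fun walk_edges :: "'a list \<Rightarrow> 'a set set" where
  "walk_edges [] = {}"
| "walk_edges [x] = {}"
| "walk_edges (x # y # zs) = insert {x, y} (walk_edges (y # zs))"

lemma path_edges_eq_walk_edges: "path_edges xs = walk_edges xs"
proof (induction xs rule: walk_edges.induct)
  case (3 x y zs)
  have "path_edges (x # y # zs) = insert {x, y} (path_edges (y # zs))"
    unfolding path_edges_def
  proof (intro set_eqI iffI)
    fix f assume "f \<in> {{(x # y # zs) ! i, (x # y # zs) ! Suc i} | i. Suc i < length (x # y # zs)}"
    then obtain i where "f = {(x # y # zs) ! i, (x # y # zs) ! Suc i}" "Suc i < length (x # y # zs)"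
      by blast
    then show "f \<in> insert {x, y} {{(y # zs) ! i, (y # zs) ! Suc i} | i. Suc i < length (y # zs)}"
      by (cases i) auto
  next
    fix f assume "f \<in> insert {x, y} {{(y # zs) ! i, (y # zs) ! Suc i} | i. Suc i < length (y # zs)}"
    then show "f \<in> {{(x # y # zs) ! i, (x # y # zs) ! Suc i} | i. Suc i < length (x # y # zs)}"
    proof
      assume "f = {x, y}"
      then show ?thesis
        by (intro CollectI exI[of _ 0]) simp
    next
      assume "f \<in> {{(y # zs) ! i, (y # zs) ! Suc i} | i. Suc i < length (y # zs)}"
      then obtain i where "f = {(y # zs) ! i, (y # zs) ! Suc i}" "Suc i < length (y # zs)"
        by blast
      then show ?thesis
        by (intro CollectI exI[of _ "Suc i"]) simp
    qed
  qed
  then show ?case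
    using 3 by simp
qed (auto simp: path_edges_def)

lemma is_path_iff:
  "is_path F u v xs \<longleftrightarrow> xs \<noteq> [] \<and> hd xs = u \<and> last xs = v \<and> distinct xs \<and> walk_edges xs \<subseteq> F"
proof -
  have "path_edges xs \<subseteq> F \<longleftrightarrow> (\<forall>i. Suc i < length xs \<longrightarrow> {xs ! i, xs ! Suc i} \<in> F)"
    unfolding path_edges_def by blast
  then show ?thesis
    unfolding is_path_def path_edges_eq_walk_edges by simp
qed

lemma walk_edges_append: "walk_edges (xs @ y # ys) = walk_edges (xs @ [y]) \<union> walk_edges (y # ys)"
proof (induction xs rule: walk_edges.induct)
  case (2 v)
  then show ?case
    by (cases ys) auto
qed auto

lemma walk_edges_rev: "walk_edges (rev xs) = walk_edges xs"
proof (induction xs rule: walk_edges.induct)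
  case (3 x y zs)
  have "walk_edges (rev (x # y # zs)) = walk_edges (rev zs @ [y]) \<union> walk_edges [y, x]"
    using walk_edges_append[of "rev zs" y "[x]"] by simp
  then show ?case
    using 3 by (auto simp: insert_commute)
qed auto

lemma walk_edges_subset_set: "f \<in> walk_edges xs \<Longrightarrow> f \<subseteq> set xs"
  by (induction xs rule: walk_edges.induct) auto

lemma walk_edges_nonempty: "xs \<noteq> [] \<Longrightarrow> hd xs \<noteq> last xs \<Longrightarrow> walk_edges xs \<noteq> {}"
  by (induction xs rule: walk_edges.induct) auto

lemma is_path_rev: "is_path F u v xs \<Longrightarrow> is_path F v u (rev xs)"
  unfolding is_path_iff by (simp add: walk_edges_rev hd_rev last_rev)

lemma is_path_mono: "is_path F u v xs \<Longrightarrow> F \<subseteq> G \<Longrightarrow> is_path G u v xs"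
  unfolding is_path_iff by blast

lemma is_path_edge: "{u, v} \<in> F \<Longrightarrow> u \<noteq> v \<Longrightarrow> is_path F u v [u, v]"
  unfolding is_path_iff by simp

lemma walk_to_path:
  "xs \<noteq> [] \<Longrightarrow> walk_edges xs \<subseteq> F \<Longrightarrow> \<exists>ys. is_path F (hd xs) (last xs) ys \<and> set ys \<subseteq> set xs"
proof (induction "length xs" arbitrary: xs rule: less_induct)
  case less
  show ?case
  proof (cases "distinct xs")
    case True
    then show ?thesis
      using less.prems unfolding is_path_iff by blast
  next
    case False
    then obtain p y q r where xs: "xs = p @ [y] @ q @ [y] @ r"
      using not_distinct_decomp by blast
    define xs' where "xs' = p @ y # r"
    have "walk_edges xs = walk_edges (p @ [y]) \<union> walk_edges (y # q @ y # r)"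
      using walk_edges_append[of p y "q @ y # r"] xs by simp
    also have "walk_edges (y # q @ y # r) = walk_edges ((y # q) @ [y]) \<union> walk_edges (y # r)"
      using walk_edges_append[of "y # q" y r] by simp
    finally have "walk_edges xs = walk_edges (p @ [y]) \<union> (walk_edges ((y # q) @ [y]) \<union> walk_edges (y # r))" .
    moreover have "walk_edges xs' = walk_edges (p @ [y]) \<union> walk_edges (y # r)"
      unfolding xs'_def by (rule walk_edges_append)
    ultimately have sub: "walk_edges xs' \<subseteq> walk_edges xs"
      by blast
    moreover have "hd xs' = hd xs"
      unfolding xs xs'_def by (cases p) auto
    moreover have "last xs' = last xs"
      unfolding xs xs'_def by (cases r) auto
    moreover have "set xs' \<subseteq> set xs" and len: "length xs' < length xs" and ne: "xs' \<noteq> []"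
      unfolding xs xs'_def by auto
    moreover obtain ys where "is_path F (hd xs') (last xs') ys" "set ys \<subseteq> set xs'"
      using less.hyps[OF len ne] sub less.prems(2) by blast
    ultimately show ?thesis
      by auto
  qed
qed

lemma is_path_trans:
  assumes "is_path F u v P" "is_path F v w Q"
  shows "\<exists>R. is_path F u w R \<and> set R \<subseteq> set P \<union> set Q"
proof -
  obtain p where p: "P = p @ [v]"
    using assms(1) unfolding is_path_iff by (metis append_butlast_last_id)
  obtain q where q: "Q = v # q"
    using assms(2) unfolding is_path_iff by (metis list.collapse)
  define W where "W = p @ v # q"
  have "walk_edges W = walk_edges P \<union> walk_edges Q"
    unfolding W_def p q by (rule walk_edges_append)
  then have "walk_edges W \<subseteq> F"
    using assms unfolding is_path_iff by blast
  moreover have "hd W = u" "last W = w" "set W = set P \<union> set Q"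
    using assms unfolding W_def p q is_path_iff by (cases p; auto)+
  ultimately show ?thesis
    using walk_to_path[of W F] unfolding W_def by auto
qed

lemma is_path_prefix:
  assumes "is_path F u v P" "z \<in> set P"
  shows "\<exists>Q. is_path F u z Q \<and> set Q \<subseteq> set P"
proof -
  obtain p r where P: "P = p @ z # r"
    using split_list[OF assms(2)] by blast
  have "walk_edges (p @ [z]) \<subseteq> F"
    using assms(1) walk_edges_append[of p z r] unfolding P is_path_iff by blast
  moreover have "hd (p @ [z]) = u" "distinct (p @ [z])"
    using assms(1) unfolding P is_path_iff by (cases p; auto)+
  ultimately have "is_path F u z (p @ [z])"
    unfolding is_path_iff by simp
  then show ?thesis
    unfolding P by auto
qed

lemma is_path_first_edge:
  assumes "is_path F a v xs" "a \<noteq> b"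
  shows "walk_edges xs \<subseteq> F - {{a, b}} \<or> (\<exists>r. xs = a # b # r \<and> walk_edges (b # r) \<subseteq> F - {{a, b}})"
proof -
  obtain r where xs: "xs = a # r"
    using assms(1) unfolding is_path_iff by (metis list.collapse)
  have ab_notin: "{a, b} \<notin> walk_edges r"
    using assms(1) walk_edges_subset_set[of "{a, b}" r] unfolding xs is_path_iff by auto
  show ?thesis
  proof (cases r)
    case (Cons x r')
    then show ?thesis
      using assms ab_notin unfolding xs is_path_iff by (auto simp: doubleton_eq_iff)
  qed (simp add: xs)
qed

lemma is_treeD:
  assumes "is_tree V E"
  shows "finite V" "\<forall>f\<in>E. \<exists>u v. f = {u, v} \<and> u \<noteq> v \<and> u \<in> V \<and> v \<in> V"
    "\<forall>u\<in>V. \<forall>v\<in>V. \<exists>!xs. is_path E u v xs"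
  using assms unfolding is_tree_def by auto

lemma tree_edge_endpoints:
  assumes "is_tree V E" "{a, b} \<in> E"
  shows "a \<noteq> b" "a \<in> V" "b \<in> V"
proof -
  obtain u v where "{a, b} = {u, v}" "u \<noteq> v" "u \<in> V" "v \<in> V"
    using is_treeD(2)[OF assms(1)] assms(2) by blast
  then show "a \<noteq> b" "a \<in> V" "b \<in> V"
    by (auto simp: doubleton_eq_iff)
qed

lemma finite_tree_edges:
  assumes "is_tree V E"
  shows "finite E"
proof -
  have "E \<subseteq> Pow V"
  proof
    fix f assume "f \<in> E"
    then obtain u v where "f = {u, v}" "u \<in> V" "v \<in> V"
      using is_treeD(2)[OF assms] by blast
    then show "f \<in> Pow V"
      by simp
  qed
  then show ?thesis
    using is_treeD(1)[OF assms] by (simp add: finite_subset)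
qed

lemma tree_path_is_path:
  assumes "is_tree V E" "u \<in> V" "v \<in> V"
  shows "is_path E u v (tree_path E u v)"
  unfolding tree_path_def using is_treeD(3)[OF assms(1)] assms(2,3) by (blast intro: theI')

lemma tree_path_unique:
  assumes "is_tree V E" "is_path E u v xs" "u \<in> V" "v \<in> V"
  shows "tree_path E u v = xs"
  using is_treeD(3)[OF assms(1)] assms(2-4) tree_path_is_path[OF assms(1,3,4)] by blast

lemma tree_path_rev:
  assumes "is_tree V E" "u \<in> V" "v \<in> V"
  shows "tree_path E v u = rev (tree_path E u v)"
  using tree_path_unique[OF assms(1) is_path_rev[OF tree_path_is_path[OF assms]] assms(3,2)] .

lemma tree_path_edges:
  assumes "is_tree V E" "u \<in> V" "v \<in> V"
  shows "path_edges (tree_path E u v) \<subseteq> E" "u \<noteq> v \<Longrightarrow> path_edges (tree_path E u v) \<noteq> {}"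
  using tree_path_is_path[OF assms] walk_edges_nonempty[of "tree_path E u v"]
  unfolding is_path_iff path_edges_eq_walk_edges by auto

lemma tree_path_subtree:
  assumes "is_tree V E" "is_tree V' E'" "E' \<subseteq> E" "V' \<subseteq> V" "u \<in> V'" "v \<in> V'"
  shows "tree_path E' u v = tree_path E u v"
proof -
  have "is_path E u v (tree_path E' u v)"
    using tree_path_is_path[OF assms(2,5,6)] assms(3) by (rule is_path_mono)
  then show ?thesis
    using tree_path_unique[OF assms(1)] assms(4-6) by (metis subsetD)
qed

lemma set_subset_walk_edges: "set xs \<subseteq> insert (hd xs) (\<Union>(walk_edges xs))"
proof (induction xs rule: walk_edges.induct)
  case (3 x y zs)
  then show ?case
    by (simp add: subset_iff)
qed auto

lemma set_tree_path_subset: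
  assumes "is_tree V E" "is_path F u v P" "F \<subseteq> E" "u \<in> V"
  shows "set P \<subseteq> V"
proof -
  have "\<Union>(walk_edges P) \<subseteq> \<Union>E"
    using assms(2,3) unfolding is_path_iff by blast
  also have "\<dots> \<subseteq> V"
    using is_treeD(2)[OF assms(1)] by force
  finally show ?thesis
    using set_subset_walk_edges[of P] assms(2,4) unfolding is_path_iff by blast
qed

lemma root_in_comp: "r \<in> V \<Longrightarrow> r \<in> comp_vertices V E e r"
  unfolding comp_vertices_def is_path_iff by (intro CollectI conjI exI[of _ "[r]"]) auto

lemma path_in_comp:
  assumes "is_tree V E" "r \<in> V" "is_path (E - {e}) r z P"
  shows "set P \<subseteq> comp_vertices V E e r"
proof
  fix y assume "y \<in> set P"
  moreover have "set P \<subseteq> V"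
    using set_tree_path_subset[OF assms(1,3) _ assms(2)] by blast
  moreover obtain Q where "is_path (E - {e}) r y Q"
    using is_path_prefix[OF assms(3) \<open>y \<in> set P\<close>] by blast
  ultimately show "y \<in> comp_vertices V E e r"
    unfolding comp_vertices_def by blast
qed

lemma same_comp_path:
  assumes "is_tree V E" "r \<in> V" "u \<in> comp_vertices V E e r" "v \<in> comp_vertices V E e r"
  shows "\<exists>Q. is_path (E - {e}) u v Q \<and> set Q \<subseteq> comp_vertices V E e r"
proof -
  obtain P1 P2 where P1: "is_path (E - {e}) r u P1" and P2: "is_path (E - {e}) r v P2"
    using assms(3,4) unfolding comp_vertices_def by blast
  then obtain Q where "is_path (E - {e}) u v Q" "set Q \<subseteq> set (rev P1) \<union> set P2"
    using is_path_trans[OF is_path_rev[OF P1] P2] by blast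
  then show ?thesis
    using path_in_comp[OF assms(1,2) P1] path_in_comp[OF assms(1,2) P2] by auto
qed

lemma is_path_comp_edges:
  assumes "is_path (E - {e}) u v Q" "set Q \<subseteq> comp_vertices V E e r"
  shows "is_path (comp_edges V E e r) u v Q"
  using assms walk_edges_subset_set[of _ Q] unfolding is_path_iff comp_edges_def by blast

lemma is_tree_comp:
  assumes tree: "is_tree V E" and r: "r \<in> V"
  shows "is_tree (comp_vertices V E e r) (comp_edges V E e r)"
  unfolding is_tree_def
proof (intro conjI ballI)
  show "finite (comp_vertices V E e r)"
    using is_treeD(1)[OF tree] unfolding comp_vertices_def by simp
  show "comp_vertices V E e r \<noteq> {}"
    using root_in_comp[OF r] by blast
next
  fix f assume f: "f \<in> comp_edges V E e r"
  then have "f \<in> E" "f \<subseteq> comp_vertices V E e r"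
    unfolding comp_edges_def by auto
  moreover obtain u v where "f = {u, v}" "u \<noteq> v"
    using is_treeD(2)[OF tree] \<open>f \<in> E\<close> by blast
  ultimately show "\<exists>u v. f = {u, v} \<and> u \<noteq> v \<and> u \<in> comp_vertices V E e r \<and> v \<in> comp_vertices V E e r"
    by auto
next
  fix u v assume u: "u \<in> comp_vertices V E e r" and v: "v \<in> comp_vertices V E e r"
  obtain Q where "is_path (E - {e}) u v Q" "set Q \<subseteq> comp_vertices V E e r"
    using same_comp_path[OF tree r u v] by blast
  then have Q: "is_path (comp_edges V E e r) u v Q"
    by (rule is_path_comp_edges)
  have sub: "comp_edges V E e r \<subseteq> E" and "u \<in> V" "v \<in> V"
    using u v unfolding comp_edges_def comp_vertices_def by auto
  then have "xs = Q" if "is_path (comp_edges V E e r) u v xs" for xs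
    using tree_path_unique[OF tree is_path_mono[OF that sub]] tree_path_unique[OF tree is_path_mono[OF Q sub]]
    by simp
  then show "\<exists>!xs. is_path (comp_edges V E e r) u v xs"
    using Q by (intro ex1I)
qed

lemma tree_path_comp:
  assumes "is_tree V E" "r \<in> V" "u \<in> comp_vertices V E e r" "v \<in> comp_vertices V E e r"
  shows "tree_path (comp_edges V E e r) u v = tree_path E u v"
proof (rule tree_path_subtree[OF assms(1) is_tree_comp[OF assms(1,2)] _ _ assms(3,4)])
  show "comp_edges V E e r \<subseteq> E" "comp_vertices V E e r \<subseteq> V"
    unfolding comp_edges_def comp_vertices_def by auto
qed

lemma comp_vertices_disjoint:
  assumes tree: "is_tree V E" and e: "{a, b} \<in> E"
  shows "comp_vertices V E {a, b} a \<inter> comp_vertices V E {a, b} b = {}"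
proof (rule ccontr)
  assume "comp_vertices V E {a, b} a \<inter> comp_vertices V E {a, b} b \<noteq> {}"
  then obtain z P1 P2 where P1: "is_path (E - {{a, b}}) a z P1" and P2: "is_path (E - {{a, b}}) b z P2"
    unfolding comp_vertices_def by blast
  then obtain P where P: "is_path (E - {{a, b}}) a b P"
    using is_path_trans[OF P1 is_path_rev[OF P2]] by blast
  have ab: "a \<noteq> b" "a \<in> V" "b \<in> V"
    using tree_edge_endpoints[OF tree e] by auto
  have "P = [a, b]"
    using tree_path_unique[OF tree is_path_mono[OF P Diff_subset] ab(2,3)]
      tree_path_unique[OF tree is_path_edge[OF e ab(1)] ab(2,3)] by auto
  then show False
    using P unfolding is_path_iff by simp
qed

lemma comp_vertices_cover:
  assumes tree: "is_tree V E" and e: "{a, b} \<in> E" and y: "y \<in> V"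
  shows "y \<in> comp_vertices V E {a, b} a \<or> y \<in> comp_vertices V E {a, b} b"
proof -
  have ab: "a \<noteq> b" "a \<in> V"
    using tree_edge_endpoints[OF tree e] by auto
  let ?P = "tree_path E a y"
  have P: "is_path E a y ?P"
    using tree_path_is_path[OF tree ab(2) y] .
  from is_path_first_edge[OF P ab(1)]
  show ?thesis
  proof
    assume "walk_edges ?P \<subseteq> E - {{a, b}}"
    then have "is_path (E - {{a, b}}) a y ?P"
      using P unfolding is_path_iff by auto
    then show ?thesis
      using y unfolding comp_vertices_def by blast
  next
    assume "\<exists>r. ?P = a # b # r \<and> walk_edges (b # r) \<subseteq> E - {{a, b}}"
    then obtain r where "?P = a # b # r" "walk_edges (b # r) \<subseteq> E - {{a, b}}"
      by blast
    then have "is_path (E - {{a, b}}) b y (b # r)"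
      using P unfolding is_path_iff by auto
    then show ?thesis
      using y unfolding comp_vertices_def by blast
  qed
qed

lemma cross_edge_on_tree_path:
  assumes tree: "is_tree V E" and e: "{a, b} \<in> E"
    and u: "u \<in> comp_vertices V E {a, b} a" and v: "v \<in> comp_vertices V E {a, b} b"
  shows "{a, b} \<in> path_edges (tree_path E u v)"
proof (rule ccontr)
  assume "{a, b} \<notin> path_edges (tree_path E u v)"
  moreover have uv: "u \<in> V" "v \<in> V"
    using u v unfolding comp_vertices_def by auto
  ultimately have Q: "is_path (E - {{a, b}}) u v (tree_path E u v)"
    using tree_path_is_path[OF tree uv] unfolding is_path_iff path_edges_eq_walk_edges by blast
  obtain P where "is_path (E - {{a, b}}) a u P"
    using u unfolding comp_vertices_def by blast
  then obtain R where "is_path (E - {{a, b}}) a v R"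
    using is_path_trans[OF _ Q] by blast
  then have "v \<in> comp_vertices V E {a, b} a"
    using uv unfolding comp_vertices_def by blast
  then show False
    using v comp_vertices_disjoint[OF tree e] by blast
qed

lemma comp_edges_partition:
  assumes tree: "is_tree V E" and e: "{a, b} \<in> E"
  shows "E - {{a, b}} = comp_edges V E {a, b} a \<union> comp_edges V E {a, b} b"
    "comp_edges V E {a, b} a \<inter> comp_edges V E {a, b} b = {}"
proof -
  have closed: "y \<in> comp_vertices V E {a, b} r"
    if x: "x \<in> comp_vertices V E {a, b} r" and xy: "{x, y} \<in> E - {{a, b}}" "x \<noteq> y" "y \<in> V"
    for x y r
  proof -
    obtain P where "is_path (E - {{a, b}}) r x P"
      using x unfolding comp_vertices_def by blast
    then obtain Q where "is_path (E - {{a, b}}) r y Q"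
      using is_path_trans[OF _ is_path_edge[OF xy(1,2)]] by blast
    then show ?thesis
      using xy(3) unfolding comp_vertices_def by blast
  qed
  show "E - {{a, b}} = comp_edges V E {a, b} a \<union> comp_edges V E {a, b} b"
  proof (intro equalityI subsetI)
    fix f assume f: "f \<in> E - {{a, b}}"
    then obtain x y where xy: "f = {x, y}" "x \<noteq> y" "x \<in> V" "y \<in> V"
      using is_treeD(2)[OF tree] by blast
    have "y \<in> comp_vertices V E {a, b} r" if "x \<in> comp_vertices V E {a, b} r" for r
      using closed[OF that] f xy by simp
    then show "f \<in> comp_edges V E {a, b} a \<union> comp_edges V E {a, b} b"
      using comp_vertices_cover[OF tree e xy(3)] f xy(1) unfolding comp_edges_def by auto
  qed (auto simp: comp_edges_def)
  show "comp_edges V E {a, b} a \<inter> comp_edges V E {a, b} b = {}"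
  proof (rule ccontr)
    assume "comp_edges V E {a, b} a \<inter> comp_edges V E {a, b} b \<noteq> {}"
    then obtain f where f: "f \<in> E" "f \<subseteq> comp_vertices V E {a, b} a" "f \<subseteq> comp_vertices V E {a, b} b"
      unfolding comp_edges_def by blast
    then obtain x y where "f = {x, y}"
      using is_treeD(2)[OF tree] by blast
    then show False
      using f comp_vertices_disjoint[OF tree e] by blast
  qed
qed

section \<open>S-sequences as schedules\<close>

definition relevant_pairs :: "'a set \<Rightarrow> ('a set \<Rightarrow> real) \<Rightarrow> 'a set set" where
  "relevant_pairs V w = {{u, v} | u v. u \<in> V \<and> v \<in> V \<and> u \<noteq> v \<and> w {u, v} > 0}"

text \<open>Taking the union over both orientations makes \<open>pair_path_edges E {u, v}\<close> independent of
  how the pair is written; in a tree it is just the edge set of the path (\<open>pair_path_edges_tree\<close>).\<close>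
definition pair_path_edges :: "'a set set \<Rightarrow> 'a set \<Rightarrow> 'a set set" where
  "pair_path_edges E p = \<Union>{path_edges (tree_path E u v) | u v. p = {u, v} \<and> u \<noteq> v}"

definition connected_weight :: "'a set \<Rightarrow> 'a set set \<Rightarrow> ('a set \<Rightarrow> real) \<Rightarrow> 'a set set \<Rightarrow> real" where
  "connected_weight V E w S = (\<Sum>p\<in>relevant_pairs V w. w p * of_bool (pair_path_edges E p \<subseteq> S))"

lemma finite_relevant_pairs: "finite V \<Longrightarrow> finite (relevant_pairs V w)"
proof -
  assume "finite V"
  moreover have "relevant_pairs V w \<subseteq> Pow V"
    unfolding relevant_pairs_def by auto
  ultimately show ?thesis
    by (simp add: finite_subset)
qed

lemma relevant_pairsE:
  assumes "p \<in> relevant_pairs V w"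
  obtains u v where "p = {u, v}" "u \<in> V" "v \<in> V" "u \<noteq> v"
  using assms unfolding relevant_pairs_def by blast

lemma relevant_pairs_restrict:
  "V' \<subseteq> V \<Longrightarrow> relevant_pairs V' w = {p \<in> relevant_pairs V w. p \<subseteq> V'}"
  unfolding relevant_pairs_def by blast

lemma path_edges_tree_path_rev:
  assumes "is_tree V E" "u \<in> V" "v \<in> V"
  shows "path_edges (tree_path E v u) = path_edges (tree_path E u v)"
  using tree_path_rev[OF assms] by (simp add: path_edges_eq_walk_edges walk_edges_rev)

lemma pair_path_edges_tree:
  assumes "is_tree V E" "u \<in> V" "v \<in> V" "u \<noteq> v"
  shows "pair_path_edges E {u, v} = path_edges (tree_path E u v)"
proof -
  have "{path_edges (tree_path E u' v') | u' v'. {u, v} = {u', v'} \<and> u' \<noteq> v'}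
      = {path_edges (tree_path E u v), path_edges (tree_path E v u)}"
    using assms(4) by (auto simp: doubleton_eq_iff)
  then show ?thesis
    unfolding pair_path_edges_def using path_edges_tree_path_rev[OF assms(1-3)] by simp
qed

lemma pair_path_edges_relevant:
  assumes "is_tree V E" "p \<in> relevant_pairs V w"
  shows "pair_path_edges E p \<subseteq> E" "pair_path_edges E p \<noteq> {}"
  using assms(2)
  by (elim relevant_pairsE; simp add: pair_path_edges_tree[OF assms(1)] tree_path_edges[OF assms(1)])+

lemma completion_time_eq:
  "distinct s \<Longrightarrow> completion_time c s g = sum c (insert g (preceding s g))"
  unfolding completion_time_def preceding_def
  by (simp add: sum.distinct_set_conv_list[symmetric] not_in_preceding[unfolded preceding_def])

lemma insert_preceding_last:
  assumes s: "distinct s" and P: "P \<subseteq> set s" and g: "g \<in> P" "P \<subseteq> insert g (preceding s g)"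
  shows "insert g (preceding s g) = {x \<in> set s. \<not> P \<subseteq> preceding s x}"
proof -
  have gs: "g \<in> set s"
    using g(1) P by blast
  show ?thesis
  proof (intro equalityI subsetI)
    fix x assume x: "x \<in> insert g (preceding s g)"
    then have xs: "x \<in> set s"
      using gs preceding_subset[of s g] by blast
    have "g \<notin> preceding s x"
    proof (cases "x = g")
      case True
      then show ?thesis
        using not_in_preceding by metis
    next
      case False
      then have "x \<in> preceding s g"
        using x by blast
      then show ?thesis
        using preceding_asym[OF s xs gs False] by blast
    qed
    then show "x \<in> {x \<in> set s. \<not> P \<subseteq> preceding s x}"
      using xs g(1) by blast
  next
    fix x assume x: "x \<in> {x \<in> set s. \<not> P \<subseteq> preceding s x}"
    show "x \<in> insert g (preceding s g)"
    proof (rule ccontr)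
      assume "x \<notin> insert g (preceding s g)"
      then have "g \<in> preceding s x"
        using preceding_asym[OF s _ gs, of x] x by blast
      then have "insert g (preceding s g) \<subseteq> preceding s x"
        using preceding_trans[OF s] by blast
      then show False
        using x g(2) by blast
    qed
  qed
qed

lemma Max_completion_time:
  fixes c :: "'a set \<Rightarrow> real"
  assumes s: "distinct s" and P: "P \<subseteq> set s" "P \<noteq> {}" and c0: "\<forall>x\<in>set s. 0 \<le> c x"
  shows "Max (completion_time c s ` P) = (\<Sum>x\<in>set s. c x * of_bool (\<not> P \<subseteq> preceding s x))"
proof -
  obtain g where g: "g \<in> P" "P \<subseteq> insert g (preceding s g)"
    using ex_last_in_list[OF s P] by blast
  have "Max (completion_time c s ` P) = completion_time c s g"
  proof (rule Max_eqI)
    fix t assume "t \<in> completion_time c s ` P"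
    then obtain h where h: "h \<in> P" "t = completion_time c s h"
      by blast
    have "insert h (preceding s h) \<subseteq> insert g (preceding s g)"
      using g h(1) preceding_trans[OF s, of h g] by blast
    then show "t \<le> completion_time c s g"
      unfolding h(2) completion_time_eq[OF s]
      using c0 g P preceding_subset[of s g] by (intro sum_mono2) auto
  qed (use g rev_finite_subset[OF finite_set P(1)] in auto)
  also have "\<dots> = sum c {x \<in> set s. \<not> P \<subseteq> preceding s x}"
    unfolding completion_time_eq[OF s] insert_preceding_last[OF s P(1) g] ..
  also have "\<dots> = (\<Sum>x\<in>set s. c x * of_bool (\<not> P \<subseteq> preceding s x))"
    by (simp add: Int_def)
  finally show ?thesis .
qed

lemma pair_connection_time_tree:
  assumes "is_tree V E" "u \<in> V" "v \<in> V" "u \<noteq> v"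
  shows "pair_connection_time E c s {u, v} = Max (completion_time c s ` path_edges (tree_path E u v))"
  unfolding pair_connection_time_def
proof (rule the_equality)
  show "\<exists>u' v'. {u, v} = {u', v'} \<and> u' \<noteq> v' \<and>
      Max (completion_time c s ` path_edges (tree_path E u v)) = connection_time E c s u' v'"
    using assms(4) unfolding connection_time_def by blast
  fix t assume "\<exists>u' v'. {u, v} = {u', v'} \<and> u' \<noteq> v' \<and> t = connection_time E c s u' v'"
  then show "t = Max (completion_time c s ` path_edges (tree_path E u v))"
    using path_edges_tree_path_rev[OF assms(1-3)] unfolding connection_time_def
    by (auto simp: doubleton_eq_iff)
qed

lemma cost_eq_sched_cost:
  assumes tree: "is_tree V E" and s: "distinct s" "set s = E" and c0: "\<forall>x\<in>E. 0 \<le> c x"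
  shows "cost V E c w s = sched_cost (connected_weight V E w) c E s"
proof -
  let ?late = "\<lambda>p x. of_bool (\<not> pair_path_edges E p \<subseteq> preceding s x) :: real"
  have conn: "pair_connection_time E c s p = (\<Sum>x\<in>E. c x * ?late p x)"
    if p: "p \<in> relevant_pairs V w" for p
  proof -
    obtain u v where uv: "p = {u, v}" "u \<in> V" "v \<in> V" "u \<noteq> v"
      using p by (rule relevant_pairsE)
    then show ?thesis
      using pair_connection_time_tree[OF tree uv(2-4)] pair_path_edges_tree[OF tree uv(2-4)]
        Max_completion_time[OF s(1), of "path_edges (tree_path E u v)" c] tree_path_edges[OF tree uv(2,3)] s c0
      by simp
  qed
  have gain: "connected_weight V E w E - connected_weight V E w (preceding s x)
      = (\<Sum>p\<in>relevant_pairs V w. w p * ?late p x)" for x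
  proof -
    have "connected_weight V E w E - connected_weight V E w (preceding s x)
        = (\<Sum>p\<in>relevant_pairs V w. w p * of_bool (pair_path_edges E p \<subseteq> E)
            - w p * of_bool (pair_path_edges E p \<subseteq> preceding s x))"
      unfolding connected_weight_def by (simp add: sum_subtractf)
    also have "\<dots> = (\<Sum>p\<in>relevant_pairs V w. w p * ?late p x)"
      using pair_path_edges_relevant(1)[OF tree] by (intro sum.cong) auto
    finally show ?thesis .
  qed
  have "cost V E c w s = (\<Sum>p\<in>relevant_pairs V w. w p * pair_connection_time E c s p)"
    unfolding cost_def relevant_pairs_def ..
  also have "\<dots> = (\<Sum>p\<in>relevant_pairs V w. \<Sum>x\<in>E. c x * (w p * ?late p x))"
    using conn by (simp add: sum_distrib_left mult.left_commute)
  also have "\<dots> = (\<Sum>x\<in>E. c x * (\<Sum>p\<in>relevant_pairs V w. w p * ?late p x))"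
    by (subst sum.swap) (simp add: sum_distrib_left)
  also have "\<dots> = sched_cost (connected_weight V E w) c E s"
    unfolding sched_cost_def gain ..
  finally show ?thesis .
qed

lemma supermodular_connected_weight:
  assumes "\<forall>p. 0 \<le> w p"
  shows "supermodular_on U (connected_weight V E w)"
  unfolding supermodular_on_def
proof (intro allI impI)
  fix A B :: "'a set set"
  have "w p * of_bool (pair_path_edges E p \<subseteq> A) + w p * of_bool (pair_path_edges E p \<subseteq> B)
     \<le> w p * of_bool (pair_path_edges E p \<subseteq> A \<union> B) + w p * of_bool (pair_path_edges E p \<subseteq> A \<inter> B)" for p
    using assms[rule_format, of p] by auto
  then show "connected_weight V E w A + connected_weight V E w B
      \<le> connected_weight V E w (A \<union> B) + connected_weight V E w (A \<inter> B)"
    unfolding connected_weight_def by (simp add: sum.distrib[symmetric] sum_mono)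
qed

lemma connected_weight_empty:
  assumes "is_tree V E"
  shows "connected_weight V E w {} = 0"
  unfolding connected_weight_def using pair_path_edges_relevant(2)[OF assms] by (intro sum.neutral) auto

lemma pair_path_edges_comp:
  assumes tree: "is_tree V E" and r: "r \<in> V" and p: "p \<in> relevant_pairs (comp_vertices V E e r) w"
  shows "pair_path_edges (comp_edges V E e r) p = pair_path_edges E p"
proof -
  obtain u v where uv: "p = {u, v}" "u \<in> comp_vertices V E e r" "v \<in> comp_vertices V E e r" "u \<noteq> v"
    using p by (rule relevant_pairsE)
  moreover have "u \<in> V" "v \<in> V"
    using uv unfolding comp_vertices_def by auto
  ultimately show ?thesis
    using pair_path_edges_tree[OF is_tree_comp[OF tree r] uv(2-4)] pair_path_edges_tree[OF tree]
      tree_path_comp[OF tree r uv(2,3)] by simp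
qed

lemma connected_weight_comp_Int:
  assumes tree: "is_tree V E" and r: "r \<in> V"
  shows "connected_weight (comp_vertices V E e r) (comp_edges V E e r) w (S \<inter> comp_edges V E e r)
    = (\<Sum>p\<in>relevant_pairs (comp_vertices V E e r) w. w p * of_bool (pair_path_edges E p \<subseteq> S))"
  unfolding connected_weight_def
  using pair_path_edges_comp[OF tree r] pair_path_edges_relevant(1)[OF is_tree_comp[OF tree r]]
  by (intro sum.cong) auto

lemma pair_path_edges_cross:
  assumes tree: "is_tree V E" and e: "{a, b} \<in> E" and p: "p \<in> relevant_pairs V w"
    and "\<not> p \<subseteq> comp_vertices V E {a, b} a" "\<not> p \<subseteq> comp_vertices V E {a, b} b"
  shows "{a, b} \<in> pair_path_edges E p"
proof -
  obtain u v where uv: "p = {u, v}" "u \<in> V" "v \<in> V" "u \<noteq> v"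
    using p by (rule relevant_pairsE)
  then have "(u \<in> comp_vertices V E {a, b} a \<and> v \<in> comp_vertices V E {a, b} b)
      \<or> (v \<in> comp_vertices V E {a, b} a \<and> u \<in> comp_vertices V E {a, b} b)"
    using assms(4,5) comp_vertices_cover[OF tree e] by auto
  then show ?thesis
  proof
    assume "u \<in> comp_vertices V E {a, b} a \<and> v \<in> comp_vertices V E {a, b} b"
    then show ?thesis
      using cross_edge_on_tree_path[OF tree e] pair_path_edges_tree[OF tree uv(2-4)] uv(1) by simp
  next
    assume "v \<in> comp_vertices V E {a, b} a \<and> u \<in> comp_vertices V E {a, b} b"
    moreover have "p = {v, u}"
      using uv(1) by blast
    ultimately show ?thesis
      using cross_edge_on_tree_path[OF tree e] pair_path_edges_tree[OF tree uv(3,2)] uv(4) by simp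
  qed
qed

lemma connected_weight_split:
  assumes tree: "is_tree V E" and e: "{a, b} \<in> E" and S: "{a, b} \<notin> S"
  shows "connected_weight V E w S
    = connected_weight (comp_vertices V E {a, b} a) (comp_edges V E {a, b} a) w (S \<inter> comp_edges V E {a, b} a)
    + connected_weight (comp_vertices V E {a, b} b) (comp_edges V E {a, b} b) w (S \<inter> comp_edges V E {a, b} b)"
proof -
  let ?Va = "comp_vertices V E {a, b} a" and ?Vb = "comp_vertices V E {a, b} b"
  let ?R = "relevant_pairs V w" and ?Ra = "relevant_pairs ?Va w" and ?Rb = "relevant_pairs ?Vb w"
  let ?g = "\<lambda>p. w p * of_bool (pair_path_edges E p \<subseteq> S)"
  have ab: "a \<in> V" "b \<in> V"
    using tree_edge_endpoints[OF tree e] by auto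
  have Ra: "?Ra = {p \<in> ?R. p \<subseteq> ?Va}" and Rb: "?Rb = {p \<in> ?R. p \<subseteq> ?Vb}"
    by (auto intro!: relevant_pairs_restrict simp: comp_vertices_def)
  have fin: "finite ?R"
    using finite_relevant_pairs is_treeD(1)[OF tree] by blast
  have disj: "?Va \<inter> ?Vb = {}"
    by (rule comp_vertices_disjoint[OF tree e])
  have cross: "?g p = 0" if p: "p \<in> ?R - (?Ra \<union> ?Rb)" for p
  proof -
    have "{a, b} \<in> pair_path_edges E p"
      using p Ra Rb by (intro pair_path_edges_cross[OF tree e]) auto
    then show ?thesis
      using S by auto
  qed
  have "connected_weight V E w S = sum ?g (?Ra \<union> ?Rb)"
    unfolding connected_weight_def using cross Ra Rb fin by (intro sum.mono_neutral_right) auto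
  also have "\<dots> = sum ?g ?Ra + sum ?g ?Rb"
  proof (rule sum.union_disjoint)
    show "finite ?Ra" "finite ?Rb"
      using Ra Rb fin by auto
    show "?Ra \<inter> ?Rb = {}"
    proof (rule equals0I)
      fix p assume "p \<in> ?Ra \<inter> ?Rb"
      then have "p \<in> ?R" "p \<subseteq> ?Va" "p \<subseteq> ?Vb"
        using Ra Rb by auto
      moreover obtain u v where "p = {u, v}" "u \<in> V" "v \<in> V" "u \<noteq> v"
        using \<open>p \<in> ?R\<close> by (rule relevant_pairsE)
      ultimately show False
        using disj by blast
    qed
  qed
  finally show ?thesis
    using connected_weight_comp_Int[OF tree ab(1)] connected_weight_comp_Int[OF tree ab(2)] by simp
qed

lemma connected_weight_comp:
  assumes tree: "is_tree V E" and e: "{a, b} \<in> E" and S: "S \<subseteq> comp_edges V E {a, b} a"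
  shows "connected_weight V E w S
    = connected_weight (comp_vertices V E {a, b} a) (comp_edges V E {a, b} a) w S"
proof -
  have "{a, b} \<notin> S" "S \<inter> comp_edges V E {a, b} a = S" "S \<inter> comp_edges V E {a, b} b = {}"
    using S comp_edges_partition[OF tree e] by auto
  moreover have "b \<in> V"
    using tree_edge_endpoints[OF tree e] by simp
  ultimately show ?thesis
    using connected_weight_split[OF tree e] connected_weight_empty[OF is_tree_comp[OF tree]] by simp
qed

lemma separable_connected_weight:
  assumes tree: "is_tree V E" and e: "{a, b} \<in> E"
  shows "separable (connected_weight V E w) (comp_edges V E {a, b} a) (comp_edges V E {a, b} b)"
  unfolding separable_def
proof (intro allI impI)
  fix S assume S: "S \<subseteq> comp_edges V E {a, b} a \<union> comp_edges V E {a, b} b"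
  have ba: "{b, a} = {a, b}"
    by blast
  have "{a, b} \<notin> S"
    using S comp_edges_partition(1)[OF tree e] by blast
  then have "connected_weight V E w S
    = connected_weight (comp_vertices V E {a, b} a) (comp_edges V E {a, b} a) w (S \<inter> comp_edges V E {a, b} a)
    + connected_weight (comp_vertices V E {a, b} b) (comp_edges V E {a, b} b) w (S \<inter> comp_edges V E {a, b} b)"
    by (rule connected_weight_split[OF tree e])
  moreover have "connected_weight V E w (S \<inter> comp_edges V E {a, b} a)
    = connected_weight (comp_vertices V E {a, b} a) (comp_edges V E {a, b} a) w (S \<inter> comp_edges V E {a, b} a)"
    by (rule connected_weight_comp[OF tree e]) blast
  moreover have "connected_weight V E w (S \<inter> comp_edges V E {a, b} b)
    = connected_weight (comp_vertices V E {a, b} b) (comp_edges V E {a, b} b) w (S \<inter> comp_edges V E {a, b} b)"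
    by (rule connected_weight_comp[OF tree e[folded ba], unfolded ba]) blast
  ultimately show "connected_weight V E w S = connected_weight V E w (S \<inter> comp_edges V E {a, b} a)
      + connected_weight V E w (S \<inter> comp_edges V E {a, b} b)"
    by simp
qed

lemma optimal_A_iff_optimal_order:
  assumes tree: "is_tree V E" and c0: "\<forall>f\<in>E. 0 \<le> c f"
  shows "optimal_A V E c w s \<longleftrightarrow> optimal_order (connected_weight V E w) c E s"
proof -
  have "cost V E c w t = sched_cost (connected_weight V E w) c E t" if "distinct t" "set t = E" for t
    using cost_eq_sched_cost[OF tree that c0] .
  then show ?thesis
    unfolding optimal_A_def optimal_order_def s_sequence_def by auto
qed

lemma optimal_A_comp_imp_optimal_order:
  assumes tree: "is_tree V E" and e: "{a, b} \<in> E" and c0: "\<forall>f\<in>E. 0 \<le> c f"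
    and opt: "optimal_A (comp_vertices V E {a, b} a) (comp_edges V E {a, b} a) c w s"
  shows "optimal_order (connected_weight V E w) c (comp_edges V E {a, b} a) s"
proof -
  have "a \<in> V"
    using tree_edge_endpoints[OF tree e] by simp
  moreover have "\<forall>f\<in>comp_edges V E {a, b} a. 0 \<le> c f"
    using c0 unfolding comp_edges_def by blast
  ultimately have "optimal_order (connected_weight (comp_vertices V E {a, b} a) (comp_edges V E {a, b} a) w) c
      (comp_edges V E {a, b} a) s"
    using opt optimal_A_iff_optimal_order[OF is_tree_comp[OF tree]] by blast
  moreover have "connected_weight V E w S
      = connected_weight (comp_vertices V E {a, b} a) (comp_edges V E {a, b} a) w S"
    if "S \<subseteq> comp_edges V E {a, b} a" for S
    using connected_weight_comp[OF tree e that] .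
  ultimately show ?thesis
    using optimal_order_cong by blast
qed

lemma optimal_A_last_append:
  assumes tree: "is_tree V E" and e: "e \<in> E" and c0: "\<forall>f\<in>E. 0 \<le> c f"
    and opt: "optimal_order (connected_weight V E w) c (E - {e}) s"
  shows "optimal_A_last V E c w e (s @ [e])"
proof -
  let ?f = "connected_weight V E w"
  define K where "K = sum c (E - {e}) * (?f E - ?f (E - {e})) + sched_cost (contraction ?f (E - {e})) c {e} [e]"
  have cost: "cost V E c w (t @ [e]) = sched_cost ?f c (E - {e}) t + K"
    if t: "distinct t" "set t = E - {e}" for t
  proof -
    have d: "distinct (t @ [e])" and E: "E = (E - {e}) \<union> {e}"
      using t e by auto
    have "cost V E c w (t @ [e]) = sched_cost ?f c E (t @ [e])"
      using d t e c0 by (intro cost_eq_sched_cost[OF tree]) auto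
    also have "\<dots> = sched_cost ?f c (E - {e}) t + K"
      using sched_cost_append[OF d t(2), of "{e}" ?f c] E unfolding K_def by simp
    finally show ?thesis .
  qed
  have s: "distinct s" "set s = E - {e}"
    using opt unfolding optimal_order_def by auto
  show ?thesis
    unfolding optimal_A_last_def s_sequence_def
  proof (intro conjI allI impI)
    show "distinct (s @ [e])" "set (s @ [e]) = E" "s @ [e] \<noteq> []" "last (s @ [e]) = e"
      using s e by auto
    fix s' assume s': "(distinct s' \<and> set s' = E) \<and> s' \<noteq> [] \<and> last s' = e"
    define t where "t = butlast s'"
    have s'_eq: "s' = t @ [e]"
      unfolding t_def using s' append_butlast_last_id[of s'] by simp
    then have t: "distinct t" "set t = E - {e}"
      using s' by auto
    have "sched_cost ?f c (E - {e}) s \<le> sched_cost ?f c (E - {e}) t"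
      using opt t unfolding optimal_order_def by blast
    then show "cost V E c w (s @ [e]) \<le> cost V E c w s'"
      using cost[OF s] cost[OF t] s'_eq by simp
  qed
qed

lemma mergeable_comp_edges:
  assumes tree: "is_tree V E" and e: "{a, b} \<in> E" and c_pos: "\<forall>f\<in>E. 0 < c f"
    and w_nonneg: "\<forall>p. 0 \<le> w p"
  shows "mergeable (connected_weight V E w) c (comp_edges V E {a, b} a) (comp_edges V E {a, b} b)"
proof (rule mergeable_if_separable)
  note E12 = comp_edges_partition[OF tree e]
  show "finite (comp_edges V E {a, b} a)" "finite (comp_edges V E {a, b} b)"
    using finite_tree_edges[OF tree] E12(1) by (metis finite_Diff finite_Un)+
  show "\<forall>x\<in>comp_edges V E {a, b} a \<union> comp_edges V E {a, b} b. 0 < c x"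
    using c_pos E12(1) by blast
qed (use comp_edges_partition(2)[OF tree e] supermodular_connected_weight[OF w_nonneg]
    separable_connected_weight[OF tree e] in auto)

theorem lemma1:
  fixes V :: "'a set" and E :: "'a set set" and c w :: "'a set \<Rightarrow> real"
    and a b :: 'a and S1 S2 :: "'a set list"
  assumes tree: "is_tree V E"
    and c_pos: "\<forall>f\<in>E. c f > 0"
    and w_nonneg: "\<forall>p. w p \<ge> 0"
    and w_diag: "\<forall>v. w {v} = 0"
    and e_edge: "{a, b} \<in> E"
    and opt1: "optimal_A (comp_vertices V E {a, b} a) (comp_edges V E {a, b} a) c w S1"
    and opt2: "optimal_A (comp_vertices V E {a, b} b) (comp_edges V E {a, b} b) c w S2"
  shows "\<exists>s. optimal_A_last V E c w {a, b} s
           \<and> filter (\<lambda>f. f \<in> comp_edges V E {a, b} a) s = S1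
           \<and> filter (\<lambda>f. f \<in> comp_edges V E {a, b} b) s = S2"
proof -
  let ?f = "connected_weight V E w" and ?E1 = "comp_edges V E {a, b} a" and ?E2 = "comp_edges V E {a, b} b"
  have c0: "\<forall>f\<in>E. 0 \<le> c f"
    using c_pos by (simp add: less_imp_le)
  have ba: "{b, a} = {a, b}"
    by blast
  have "optimal_order ?f c ?E1 S1" "optimal_order ?f c ?E2 S2"
    by (rule optimal_A_comp_imp_optimal_order[OF tree e_edge c0 opt1],
        rule optimal_A_comp_imp_optimal_order[OF tree e_edge[folded ba] c0 opt2[folded ba], unfolded ba])
  then obtain s where s: "optimal_order ?f c (?E1 \<union> ?E2) s"
    and "filter (\<lambda>f. f \<in> ?E1) s = S1" "filter (\<lambda>f. f \<in> ?E2) s = S2"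
    using mergeable_comp_edges[OF tree e_edge c_pos w_nonneg] unfolding mergeable_def by blast
  moreover have "?E1 \<union> ?E2 = E - {{a, b}}" "{a, b} \<notin> ?E1 \<union> ?E2"
    using comp_edges_partition(1)[OF tree e_edge] by auto
  ultimately show ?thesis
    using optimal_A_last_append[OF tree e_edge c0] by (intro exI[of _ "s @ [{a, b}]"]) auto
qed

end
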